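(* Let $p\ge2$ and let $\epsilon>0$ be sufficiently small. For $\chi\in[0,\pi]$, $\psi\in[-\pi/2,\pi/2]$ set $A_0=e^{i\chi\sigma_z}$, $a_0=i\sigma_x\cos\psi+i\sigma_z\sin\psi$ and $$Q_p(\chi,\psi)=\big[(\,A_0,\ A_0^{-1}a_0A_0^{p+1},\ A_0^{-1}a_0A_0,\ a_0^{-1}\,)\big]\in R(T^2,2).$$ If $Q_p(\chi,\psi)=L_s(\phi,\theta)$ for some spherical-polar coordinates $(\phi,\theta)$, then $\phi=\pi/2$ and there is $n\in\{0,1,\dots,p-1\}$ with $$\chi=(n+\tfrac12)\tfrac{\pi}{p},\qquad \psi=(-1)^{n+1}\big(\tfrac{\pi}{2}-\epsilon\big).$$
   Context: Pauli matrices standard; $[A,B]=ABA^{-1}B^{-1}$. $R(T^2,2)$ is the space of tuples $(A,B,a,b)\in SU(2)^4$ with $\operatorname{tr}a=\operatorname{tr}b=0$ and $[A,B]ab=1$ modulo simultaneous conjugation (the tuple defining $Q_p$ satisfies these conditions). For $\nu=\epsilon\sin\phi$, $L_s(\phi,\theta)=[(A,B,a,b)]$ with $a=i\sigma_z$, $h=(\cos^2\nu+\sin^2\nu\sin^2\theta)^{-1/2}(i\sigma_x\cos\nu-i\sigma_z\sin\nu\sin\theta)$, $A=h(\cos\phi+i\sin\phi(\sigma_x\cos\theta+\sigma_y\sin\theta))$, $B=\cos\nu+i\sin\nu(\sigma_x\cos\theta+\sigma_y\sin\theta)$, $b=-ha^{-1}h^{-1}$. ($Q_p(\chi,\psi)$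 is the image of the disk Lagrangian point $[(e^{i\chi\sigma_z},1,a_0,a_0^{-1})]$ under the mapping class $\alpha_1^{-1}T_a^p$ that produces the simple knot in $L(p,1)$ representing $1\in H_1(L(p,1);\mathbb{Z})$.) *)

theory Defs
  imports "HOL-Analysis.Analysis"
begin

type_synonym cmat = "complex^2^2"

definition mk2 :: "complex \<Rightarrow> complex \<Rightarrow> complex \<Rightarrow> complex \<Rightarrow> cmat" where
  "mk2 a b c d = (\<chi> i j. if i = 1 then (if j = 1 then a else b) else (if j = 1 then c else d))"

definition sigma_x :: cmat where "sigma_x = mk2 0 1 1 0"
definition sigma_y :: cmat where "sigma_y = mk2 0 (-\<i>) \<i> 0"
definition sigma_z :: cmat where "sigma_z = mk2 1 0 0 (-1)"

definition cscal :: "complex \<Rightarrow> cmat \<Rightarrow> cmat" where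
  "cscal c M = (\<chi> i j. c * M $ i $ j)"

definition mtrace :: "cmat \<Rightarrow> complex" where
  "mtrace M = M $ 1 $ 1 + M $ 2 $ 2"

definition madj :: "cmat \<Rightarrow> cmat" where
  "madj M = (\<chi> i j. cnj (M $ j $ i))"

definition SU2 :: "cmat set" where
  "SU2 = {U. U ** madj U = mat 1 \<and> det U = 1}"

definition mpow :: "cmat \<Rightarrow> nat \<Rightarrow> cmat" where
  "mpow M n = (((**) M) ^^ n) (mat 1)"

definition commutator :: "cmat \<Rightarrow> cmat \<Rightarrow> cmat" where
  "commutator A B = A ** B ** matrix_inv A ** matrix_inv B"

definition RT2 :: "(cmat \<times> cmat \<times> cmat \<times> cmat) set" where
  "RT2 = {(A,B,a,b). A \<in> SU2 \<and> B \<in> SU2 \<and> a \<in> SU2 \<and> b \<in> SU2 \<and>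
      mtrace a = 0 \<and> mtrace b = 0 \<and> commutator A B ** a ** b = mat 1}"

definition same_class :: "(cmat \<times> cmat \<times> cmat \<times> cmat) \<Rightarrow> (cmat \<times> cmat \<times> cmat \<times> cmat) \<Rightarrow> bool" where
  "same_class X Y = (case X of (A,B,a,b) \<Rightarrow> case Y of (A',B',a',b') \<Rightarrow>
     (\<exists>g\<in>SU2. A' = g ** A ** matrix_inv g \<and> B' = g ** B ** matrix_inv g \<and>
               a' = g ** a ** matrix_inv g \<and> b' = g ** b ** matrix_inv g))"

text \<open>Q_p(chi,psi), with A_0 = e^{i chi sigma_z} = cos chi + i sin chi sigma_z.\<close>
definition A0 :: "real \<Rightarrow> cmat" where
  "A0 chi = mat (cos chi) + cscal (\<i> * sin chi) sigma_z"

definition a0 :: "real \<Rightarrow> cmat" where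
  "a0 \<psi> = cscal (\<i> * cos \<psi>) sigma_x + cscal (\<i> * sin \<psi>) sigma_z"

definition Qp :: "nat \<Rightarrow> real \<Rightarrow> real \<Rightarrow> cmat \<times> cmat \<times> cmat \<times> cmat" where
  "Qp p chi \<psi> = (A0 chi,
                 matrix_inv (A0 chi) ** a0 \<psi> ** mpow (A0 chi) (p + 1),
                 matrix_inv (A0 chi) ** a0 \<psi> ** A0 chi,
                 matrix_inv (a0 \<psi>))"

definition Ls :: "real \<Rightarrow> real \<Rightarrow> real \<Rightarrow> cmat \<times> cmat \<times> cmat \<times> cmat" where
  "Ls eps \<phi> \<theta> =
    (let \<nu> = eps * sin \<phi>;
         a = cscal \<i> sigma_z;
         h = cscal (complex_of_real ((cos \<nu> ^ 2 + sin \<nu> ^ 2 * sin \<theta> ^ 2) powr (-1/2)))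
               (cscal (\<i> * cos \<nu>) sigma_x - cscal (\<i> * sin \<nu> * sin \<theta>) sigma_z);
         n = cscal (complex_of_real (cos \<theta>)) sigma_x + cscal (complex_of_real (sin \<theta>)) sigma_y;
         A = h ** (mat (cos \<phi>) + cscal (\<i> * sin \<phi>) n);
         B = mat (cos \<nu>) + cscal (\<i> * sin \<nu>) n;
         b = - (h ** matrix_inv a ** matrix_inv h)
     in (A, B, a, b))"

end

theory Submission
  imports Defs
begin

text \<open>Traces of A, B, AB, Aa, Ba and ABa are invariant under simultaneous conjugation. All matrices
occurring in Q_p and L_s are real quaternions, so comparing these traces gives six real equations.
The Ba-equation forces cos (p chi) = 0; together with the A-, B- and AB-equations this gives
cos phi * sin nu * cos theta = 0, and sin nu \<noteq> 0 because otherwise sin psi = 0 would contradict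
tr B = 2 cos nu > 0. If cos theta = 0, the Aa- and ABa-equations say that sin (phi + nu) and
sin (phi + 2 nu) are proportional to cos nu and cos (2 nu) with the same factor, and this again
forces cos phi = 0. Hence phi = pi/2 and nu = eps, and chi and psi are read off from
cos (p chi) = 0 and the B-equation.\<close>

lemma mk2_nth [simp]:
  "mk2 a b c d $ 1 $ 1 = a" "mk2 a b c d $ 1 $ 2 = b"
  "mk2 a b c d $ 2 $ 1 = c" "mk2 a b c d $ 2 $ 2 = d"
  by (simp_all add: mk2_def)

lemma cmat_eq_iff:
  "(M::cmat) = N \<longleftrightarrow> M$1$1 = N$1$1 \<and> M$1$2 = N$1$2 \<and> M$2$1 = N$2$1 \<and> M$2$2 = N$2$2"
  by (auto simp: vec_eq_iff forall_2)

lemma matrix_inv_unique: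
  fixes A :: "'a::semiring_1^'n^'n"
  assumes "A ** B = mat 1" "B ** A = mat 1"
  shows "matrix_inv A = B"
proof -
  have "A ** matrix_inv A = mat 1 \<and> matrix_inv A ** A = mat 1"
    unfolding matrix_inv_def by (rule someI[of _ B]) (use assms in blast)
  then have "matrix_inv A = matrix_inv A ** (A ** B)"
    using assms by simp
  also have "\<dots> = B"
    using \<open>A ** matrix_inv A = mat 1 \<and> matrix_inv A ** A = mat 1\<close> by (simp add: matrix_mul_assoc)
  finally show ?thesis .
qed

lemma invertible_matrix_inv:
  fixes A :: "'a::semiring_1^'n^'m"
  assumes "invertible A"
  shows "A ** matrix_inv A = mat 1" "matrix_inv A ** A = mat 1"
  using someI_ex[OF assms[unfolded invertible_def]] by (simp_all add: matrix_inv_def)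

lemma conjugate_mult:
  fixes g X Y :: "'a::semiring_1^'n^'n"
  assumes "invertible g"
  shows "(g ** X ** matrix_inv g) ** (g ** Y ** matrix_inv g) = g ** (X ** Y) ** matrix_inv g"
proof -
  have "(g ** X ** matrix_inv g) ** (g ** Y ** matrix_inv g)
          = g ** X ** (matrix_inv g ** g) ** Y ** matrix_inv g"
    by (simp add: matrix_mul_assoc)
  then show ?thesis
    using invertible_matrix_inv[OF assms] by (simp add: matrix_mul_assoc)
qed

lemma trace_conjugate:
  fixes g X :: "'a::comm_semiring_1^'n^'n"
  assumes "invertible g"
  shows "trace (g ** X ** matrix_inv g) = trace X"
  using invertible_matrix_inv[OF assms] trace_mul_sym[of "g ** X" "matrix_inv g"]
  by (simp add: matrix_mul_assoc)

lemma mtrace_eq_trace: "mtrace M = trace M"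
  by (simp add: mtrace_def trace_def sum_2)

lemma same_class_mtrace:
  assumes "same_class (A, B, a, b) (A', B', a', b')"
  shows "mtrace A' = mtrace A" "mtrace B' = mtrace B" "mtrace (A' ** B') = mtrace (A ** B)"
    "mtrace (A' ** a') = mtrace (A ** a)" "mtrace (B' ** a') = mtrace (B ** a)"
    "mtrace (A' ** B' ** a') = mtrace (A ** B ** a)"
proof -
  obtain g where "g \<in> SU2" and conj: "A' = g ** A ** matrix_inv g" "B' = g ** B ** matrix_inv g"
    "a' = g ** a ** matrix_inv g"
    using assms unfolding same_class_def by auto
  then have "invertible g"
    by (simp add: SU2_def invertible_det_nz)
  then show "mtrace A' = mtrace A" "mtrace B' = mtrace B" "mtrace (A' ** B') = mtrace (A ** B)"
    "mtrace (A' ** a') = mtrace (A ** a)" "mtrace (B' ** a') = mtrace (B ** a)"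
    "mtrace (A' ** B' ** a') = mtrace (A ** B ** a)"
    unfolding conj mtrace_eq_trace by (simp_all add: conjugate_mult trace_conjugate)
qed

definition quat :: "real \<Rightarrow> real \<Rightarrow> real \<Rightarrow> real \<Rightarrow> cmat" where
  "quat w x y z = mat (of_real w) +
     cscal \<i> (cscal (of_real x) sigma_x + cscal (of_real y) sigma_y + cscal (of_real z) sigma_z)"

lemma quat_mk2: "quat w x y z = mk2 (Complex w z) (Complex y x) (Complex (-y) x) (Complex w (-z))"
  by (simp add: quat_def cmat_eq_iff mat_def cscal_def sigma_x_def sigma_y_def sigma_z_def complex_eq_iff)

text \<open>The basis i sigma_x, i sigma_y, i sigma_z satisfies IJ = -K, whence the signs of the cross terms.\<close>

lemma quat_mult [simp]:
  "quat w x y z ** quat w' x' y' z' =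
     quat (w*w' - x*x' - y*y' - z*z') (w*x' + x*w' - y*z' + z*y')
          (w*y' + y*w' - z*x' + x*z') (w*z' + z*w' - x*y' + y*x')"
  by (simp add: quat_mk2 cmat_eq_iff matrix_matrix_mult_def sum_2 complex_eq_iff algebra_simps)

lemma quat_eq_iff: "quat w x y z = quat w' x' y' z' \<longleftrightarrow> w = w' \<and> x = x' \<and> y = y' \<and> z = z'"
  by (auto simp: quat_mk2 cmat_eq_iff complex_eq_iff)

lemma mtrace_quat [simp]: "mtrace (quat w x y z) = of_real (2 * w)"
  by (simp add: quat_mk2 mtrace_def complex_eq_iff)

lemma quat_one: "quat 1 0 0 0 = mat 1"
  by (simp add: quat_mk2 cmat_eq_iff mat_def complex_eq_iff)

lemma matrix_inv_quat:
  assumes "w\<^sup>2 + x\<^sup>2 + y\<^sup>2 + z\<^sup>2 = 1"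
  shows "matrix_inv (quat w x y z) = quat w (-x) (-y) (-z)"
  by (rule matrix_inv_unique)
    (use assms in \<open>simp_all add: quat_one[symmetric] power2_eq_square algebra_simps\<close>)

definition axis_rot :: "real \<Rightarrow> real \<Rightarrow> cmat" where
  "axis_rot th a = quat (cos a) (sin a * cos th) (sin a * sin th) 0"

lemma axis_rot_add: "axis_rot th a ** axis_rot th b = axis_rot th (a + b)"
  by (simp add: axis_rot_def quat_eq_iff cos_add sin_add algebra_simps)
    (use sin_cos_squared_add[of th] in algebra)

lemma A0_quat: "A0 chi = quat (cos chi) 0 0 (sin chi)"
  by (simp add: A0_def quat_mk2 cmat_eq_iff mat_def cscal_def sigma_z_def complex_eq_iff
      cos_of_real sin_of_real)

lemma a0_quat: "a0 psi = quat 0 (cos psi) 0 (sin psi)"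
  by (simp add: a0_def quat_mk2 cmat_eq_iff cscal_def sigma_x_def sigma_z_def complex_eq_iff
      cos_of_real sin_of_real)

lemma mpow_A0: "mpow (A0 chi) n = A0 (real n * chi)"
proof (induction n)
  case 0
  show ?case by (simp add: mpow_def A0_quat quat_one)
next
  case (Suc n)
  have "mpow (A0 chi) (Suc n) = A0 chi ** A0 (real n * chi)"
    using Suc by (simp add: mpow_def)
  also have "\<dots> = A0 (real (Suc n) * chi)"
    by (simp add: A0_quat cos_add sin_add distrib_right add.commute)
  finally show ?case .
qed

lemma matrix_inv_A0: "matrix_inv (A0 chi) = A0 (- chi)"
  by (simp add: A0_quat matrix_inv_quat)

lemma Qp_components:
  assumes "Qp p chi psi = (A, B, a, b)"
  shows "A = A0 chi" "B = A0 (- chi) ** a0 psi ** A0 (real p * chi + chi)"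
    "a = A0 (- chi) ** a0 psi ** A0 chi"
  using assms by (auto simp: Qp_def mpow_A0 matrix_inv_A0 distrib_right add.commute)

lemma Qp_traces:
  assumes "Qp p chi psi = (A, B, a, b)"
  shows "mtrace A = of_real (2 * cos chi)"
    and "mtrace B = of_real (- 2 * sin psi * sin (real p * chi))"
    and "mtrace (A ** B) = of_real (- 2 * sin psi * sin (real p * chi + chi))"
    and "mtrace (A ** a) = of_real (- 2 * sin psi * sin chi)"
    and "mtrace (B ** a) = of_real (- 2 * cos (real p * chi))"
    and "mtrace (A ** B ** a) = of_real (- 2 * ((sin psi)\<^sup>2 * cos (real p * chi + chi)
                                             + (cos psi)\<^sup>2 * cos (real p * chi - chi)))"
  unfolding Qp_components[OF assms]
  by (simp_all only: A0_quat a0_quat quat_mult mtrace_quat of_real_eq_iff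
      cos_add sin_add cos_diff sin_diff cos_minus sin_minus)
    (use sin_cos_squared_add[of chi] sin_cos_squared_add[of psi] in algebra)+

lemma Ls_components:
  assumes "Ls eps ph th = (A, B, a, b)"
    and "nu = eps * sin ph" and "k = ((cos nu)\<^sup>2 + (sin nu)\<^sup>2 * (sin th)\<^sup>2) powr (-1/2)"
  shows "A = quat 0 (k * cos nu) 0 (- k * sin nu * sin th) ** axis_rot th ph"
    "B = axis_rot th nu"
    "a = quat 0 0 0 1"
  using assms(1)[symmetric] assms(2,3)
  by (simp_all add: Ls_def Let_def axis_rot_def quat_mk2 cmat_eq_iff mat_def cscal_def
      matrix_matrix_mult_def sum_2 sigma_x_def sigma_y_def sigma_z_def complex_eq_iff
      cos_of_real sin_of_real algebra_simps)

lemma Ls_traces: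
  assumes "Ls eps ph th = (A, B, a, b)"
    and "nu = eps * sin ph" and "k = ((cos nu)\<^sup>2 + (sin nu)\<^sup>2 * (sin th)\<^sup>2) powr (-1/2)"
  shows "mtrace A = of_real (- 2 * k * cos nu * sin ph * cos th)"
    and "mtrace B = of_real (2 * cos nu)"
    and "mtrace (A ** B) = of_real (- 2 * k * cos nu * sin (ph + nu) * cos th)"
    and "mtrace (A ** a) = of_real (2 * k * sin th * sin (ph + nu))"
    and "mtrace (B ** a) = 0"
    and "mtrace (A ** B ** a) = of_real (2 * k * sin th * sin (ph + 2 * nu))"
  unfolding Ls_components[OF assms] matrix_mul_assoc[symmetric] axis_rot_add
  by (simp_all only: axis_rot_def quat_mult mtrace_quat of_real_eq_iff of_real_0 mult_2 sin_add cos_add)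
    (simp_all add: algebra_simps)

lemma Qp_Ls_trace_equations:
  assumes "same_class (Qp p chi psi) (Ls eps ph th)"
    and "nu = eps * sin ph" and "k = ((cos nu)\<^sup>2 + (sin nu)\<^sup>2 * (sin th)\<^sup>2) powr (-1/2)"
  shows "- k * cos nu * sin ph * cos th = cos chi"
    and "cos nu = - sin psi * sin (real p * chi)"
    and "k * cos nu * sin (ph + nu) * cos th = sin psi * sin (real p * chi + chi)"
    and "k * sin th * sin (ph + nu) = - sin psi * sin chi"
    and "cos (real p * chi) = 0"
    and "k * sin th * sin (ph + 2 * nu)
           = - ((sin psi)\<^sup>2 * cos (real p * chi + chi) + (cos psi)\<^sup>2 * cos (real p * chi - chi))"
proof -
  obtain A B a b where Q: "Qp p chi psi = (A, B, a, b)"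
    by (metis prod_cases4)
  obtain A' B' a' b' where L: "Ls eps ph th = (A', B', a', b')"
    by (metis prod_cases4)
  note traces = same_class_mtrace[OF assms(1)[unfolded Q L]]
    Qp_traces[OF Q] Ls_traces[OF L assms(2,3)]
  show "- k * cos nu * sin ph * cos th = cos chi"
    using traces(1) unfolding traces(7,13) of_real_eq_iff by linarith
  show "cos nu = - sin psi * sin (real p * chi)"
    using traces(2) unfolding traces(8,14) of_real_eq_iff by linarith
  show "k * cos nu * sin (ph + nu) * cos th = sin psi * sin (real p * chi + chi)"
    using traces(3) unfolding traces(9,15) of_real_eq_iff by linarith
  show "k * sin th * sin (ph + nu) = - sin psi * sin chi"
    using traces(4) unfolding traces(10,16) of_real_eq_iff by linarith
  show "cos (real p * chi) = 0"
    using traces(5) unfolding traces(11,17) by simp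
  show "k * sin th * sin (ph + 2 * nu)
          = - ((sin psi)\<^sup>2 * cos (real p * chi + chi) + (cos psi)\<^sup>2 * cos (real p * chi - chi))"
    using traces(6) unfolding traces(12,18) of_real_eq_iff by simp
qed

lemma cos_eq_zero_of_sin_shifts:
  fixes ph nu c s :: real
  assumes "c \<noteq> 0" "sin nu \<noteq> 0"
    and shift1: "c * sin (ph + nu) = s * cos nu"
    and shift2: "c * sin (ph + 2 * nu) = s * cos (2 * nu)"
  shows "cos ph = 0"
proof -
  have "sin nu * (c * cos (ph + nu)) = sin nu * (- s * sin nu)"
  proof -
    have "sin (ph + 2 * nu) = sin (ph + nu) * cos nu + cos (ph + nu) * sin nu"
      unfolding mult_2 add.assoc[symmetric] by (rule sin_add)
    then show ?thesis
      using shift1 shift2 sin_cos_squared_add[of nu] by (simp add: cos_double) algebra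
  qed
  then have cos_shift: "c * cos (ph + nu) = - s * sin nu"
    using \<open>sin nu \<noteq> 0\<close> by (metis mult_left_cancel)
  have "c * cos ph = c * cos (ph + nu) * cos nu + c * sin (ph + nu) * sin nu"
    using cos_diff[of "ph + nu" nu] by (simp add: algebra_simps)
  also have "\<dots> = 0"
    using cos_shift shift1 by simp
  finally show ?thesis
    using \<open>c \<noteq> 0\<close> by simp
qed

lemma cos_mult_eq_zero_cases:
  fixes p :: nat and chi :: real
  assumes "p > 0" "0 \<le> chi" "chi \<le> pi" "cos (real p * chi) = 0"
  obtains n where "n < p" "chi = (real n + 1/2) * pi / real p" "sin (real p * chi) = (-1) ^ n"
proof -
  obtain m where m: "odd m" "real p * chi = real m * (pi/2)"
    using cos_zero_lemma[of "real p * chi"] assms by auto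
  then obtain n where n: "m = 2 * n + 1"
    using oddE by blast
  have p_chi: "real p * chi = real n * pi + pi/2"
    using m(2) n by (simp add: algebra_simps)
  show ?thesis
  proof
    show chi: "chi = (real n + 1/2) * pi / real p"
      using p_chi \<open>p > 0\<close> by (simp add: field_simps)
    have "real p * chi \<le> real p * pi"
      using \<open>chi \<le> pi\<close> by (simp add: mult_left_mono)
    then have "(real n + 1/2) * pi \<le> real p * pi"
      using p_chi by (simp add: algebra_simps)
    then show "n < p"
      by simp
    show "sin (real p * chi) = (-1) ^ n"
      unfolding p_chi by (simp add: sin_add)
  qed
qed

lemma sin_eq_signed_cos_imp:
  fixes eps psi :: real and m :: nat
  assumes "0 \<le> eps" "eps \<le> pi" "- (pi/2) \<le> psi" "psi \<le> pi/2"
    and "sin psi = (-1) ^ m * cos eps"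
  shows "psi = (-1) ^ m * (pi/2 - eps)"
proof -
  define t where "t = (-1::real) ^ m * (pi/2 - eps)"
  have "sin t = sin psi"
    using assms(5) unfolding t_def by (cases "even m") (simp_all add: sin_diff)
  moreover have "- (pi/2) \<le> t" "t \<le> pi/2"
    unfolding t_def using assms(1,2) by (cases "even m"; simp)+
  ultimately show ?thesis
    using arcsin_sin[of psi] arcsin_sin[of t] assms(3,4) unfolding t_def by simp
qed

lemma trace_equations_imp_cos_zero:
  fixes eps ph th chi psi t k nu :: real
  assumes eps: "0 < eps" "eps < pi/2" and ph: "0 \<le> ph" "ph \<le> pi"
    and chi: "0 \<le> chi" "chi \<le> pi" and nu: "nu = eps * sin ph"
    and E1: "- k * cos nu * sin ph * cos th = cos chi"
    and E2: "cos nu = - sin psi * sin t"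
    and E3: "k * cos nu * sin (ph + nu) * cos th = sin psi * sin (t + chi)"
    and E4: "k * sin th * sin (ph + nu) = - sin psi * sin chi"
    and E5: "cos t = 0"
    and E6: "k * sin th * sin (ph + 2 * nu)
               = - ((sin psi)\<^sup>2 * cos (t + chi) + (cos psi)\<^sup>2 * cos (t - chi))"
  shows "cos ph = 0"
proof -
  have sin_t_sq: "(sin t)\<^sup>2 = 1"
    using E5 sin_cos_squared_add[of t] by simp
  have "0 \<le> nu" "nu \<le> eps"
    using nu eps ph sin_ge_zero[of ph] by (auto simp: mult_left_le)
  then have "0 < cos nu"
    using eps by (intro cos_gt_zero_pi) auto
  have "0 \<le> sin chi"
    using chi by (simp add: sin_ge_zero)
  have sin_chi_of_cos: "sin chi = 1" if "cos chi = 0"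
    using that \<open>0 \<le> sin chi\<close> sin_cos_squared_add[of chi] by (simp add: power2_eq_1_iff)
  have "k \<noteq> 0"
  proof
    assume "k = 0"
    then have "sin psi = 0"
      using E1 E4 sin_chi_of_cos by simp
    then show False
      using E2 \<open>0 < cos nu\<close> by simp
  qed
  have "sin nu \<noteq> 0"
  proof
    assume "sin nu = 0"
    then have "nu = 0"
      using \<open>0 \<le> nu\<close> \<open>nu \<le> eps\<close> eps sin_gt_zero[of nu] by fastforce
    then have "sin ph = 0"
      using nu eps by simp
    then have "sin psi = 0"
      using E1 E4 sin_chi_of_cos \<open>nu = 0\<close> by simp
    then show False
      using E2 \<open>nu = 0\<close> by simp
  qed
  have "k * cos nu * cos th * (cos ph * sin nu) = 0"
  proof -
    have "k * cos nu * cos th * sin (ph + nu) = - cos nu * cos chi"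
      using E2 E3 E5 by (simp add: sin_add algebra_simps)
    also have "\<dots> = k * cos nu * cos th * (sin ph * cos nu)"
      unfolding E1[symmetric] by (simp add: algebra_simps)
    finally show ?thesis
      by (simp add: sin_add algebra_simps)
  qed
  then consider "cos ph = 0" | "cos th = 0"
    using \<open>k \<noteq> 0\<close> \<open>0 < cos nu\<close> \<open>sin nu \<noteq> 0\<close> by force
  then show ?thesis
  proof cases
    case 2
    have "cos chi = 0" "sin chi = 1"
      using E1 2 sin_chi_of_cos by simp_all
    have sin_psi: "sin psi = - cos nu * sin t"
      using E2 sin_t_sq by (simp add: power2_eq_square)
    have "k * sin th \<noteq> 0"
      using \<open>k \<noteq> 0\<close> 2 sin_cos_squared_add[of th] by auto
    moreover have "k * sin th * sin (ph + nu) = sin t * cos nu"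
      using E4 \<open>sin chi = 1\<close> sin_psi by simp
    moreover have "k * sin th * sin (ph + 2 * nu) = sin t * cos (2 * nu)"
    proof -
      have "k * sin th * sin (ph + 2 * nu) = sin t * ((sin psi)\<^sup>2 - (cos psi)\<^sup>2)"
        using E6 E5 \<open>cos chi = 0\<close> \<open>sin chi = 1\<close> by (simp add: cos_add cos_diff algebra_simps)
      also have "\<dots> = sin t * (2 * (sin psi)\<^sup>2 - 1)"
        by (simp add: cos_squared_eq)
      also have "\<dots> = sin t * cos (2 * nu)"
        using sin_psi sin_t_sq by (simp add: cos_double_cos power_mult_distrib)
      finally show ?thesis .
    qed
    ultimately show ?thesis
      using cos_eq_zero_of_sin_shifts \<open>sin nu \<noteq> 0\<close> by blast
  qed
qed

theorem lemma5p5: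
  fixes p :: nat
  assumes "p \<ge> 2"
  shows "\<exists>eps0>0. \<forall>eps. 0 < eps \<and> eps < eps0 \<longrightarrow>
           (\<forall>chi \<psi> \<phi> \<theta>. 0 \<le> chi \<and> chi \<le> pi \<and> -pi/2 \<le> \<psi> \<and> \<psi> \<le> pi/2 \<and>
              0 \<le> \<phi> \<and> \<phi> \<le> pi \<and> 0 \<le> \<theta> \<and> \<theta> < 2*pi \<and>
              same_class (Qp p chi \<psi>) (Ls eps \<phi> \<theta>) \<longrightarrow>
              \<phi> = pi/2 \<and>
              (\<exists>n::nat. n < p \<and> chi = (real n + 1/2) * pi / real p \<and>
                        \<psi> = (-1) ^ (n + 1) * (pi/2 - eps)))"
proof (intro exI[of _ "pi/2"] conjI allI impI)
  show "0 < pi/2"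
    by simp
  fix eps chi psi ph th :: real
  assume eps: "0 < eps \<and> eps < pi/2"
    and H: "0 \<le> chi \<and> chi \<le> pi \<and> -pi/2 \<le> psi \<and> psi \<le> pi/2 \<and>
            0 \<le> ph \<and> ph \<le> pi \<and> 0 \<le> th \<and> th < 2*pi \<and>
            same_class (Qp p chi psi) (Ls eps ph th)"
  define nu where "nu = eps * sin ph"
  define k where "k = ((cos nu)\<^sup>2 + (sin nu)\<^sup>2 * (sin th)\<^sup>2) powr (-1/2)"
  note E = Qp_Ls_trace_equations[OF _ nu_def k_def, of p chi psi]
  have "cos ph = 0"
    using trace_equations_imp_cos_zero[OF _ _ _ _ _ _ nu_def E] eps H by blast
  then have ph: "ph = pi/2"
    using arccos_cos[of ph] H by simp
  have "nu = eps"
    unfolding nu_def ph by simp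
  obtain n where n: "n < p" "chi = (real n + 1/2) * pi / real p" "sin (real p * chi) = (-1) ^ n"
    using cos_mult_eq_zero_cases[of p chi] E(5) H assms by auto
  have "sin psi = (-1) ^ (n + 1) * cos eps"
    using E(2) H n(3) \<open>nu = eps\<close> by simp
  then have "psi = (-1) ^ (n + 1) * (pi/2 - eps)"
    using sin_eq_signed_cos_imp[of eps psi "n + 1"] eps H by auto
  with n show "\<exists>n::nat. n < p \<and> chi = (real n + 1/2) * pi / real p \<and>
                             psi = (-1) ^ (n + 1) * (pi/2 - eps)"
    by blast
  show "ph = pi/2"
    using ph .
qed

end
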